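(* Let $q\geq 4$ be an integer and let $G=K_{q,q,\dots,q}$ be the complete $r$-partite graph on $rq$ vertices with all parts of size $q$. Then $\mathcal{Z}^{\mathrm{TS}}_+(G)$ and $\mathcal{Z}^{\mathrm{TE}}_+(G)$ both have exactly $r$ connected components.
   Context: PSD forcing: vertices are colored blue or white; if $B$ is the current set of blue vertices, $C$ a connected component of $G-B$, and $u$ a blue vertex with $N_G(u)\cap V(C)=\{v\}$, then $u$ may force $v$ to become blue. A PSD forcing set is a set of initially blue vertices from which repeated application of this rule turns every vertex blue; $\mathrm{Z}_+(G)$ is the minimum size of a PSD forcing set. $\mathcal{Z}^{\mathrm{TE}}_+(G)$ has as vertices the minimum PSD forcing sets of $G$, with $S_1S_2$ an edge iff $S_1\setminus S_2=\{v_1\}$ and $S_2\setminus S_1=\{v_2\}$ for some vertices $v_1,v_2$; $\mathcal{Z}^{\mathrm{TS}}_+(G)$ has the same vertices with the additional requirement $v_1v_2\in E(G)$. *)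

theory Defs
  imports Main
begin

text \<open>A graph is given by a finite vertex set V and a symmetric irreflexive
adjacency relation E (only its restriction to V matters).\<close>

definition reach_in :: "'a set \<Rightarrow> ('a \<Rightarrow> 'a \<Rightarrow> bool) \<Rightarrow> 'a \<Rightarrow> 'a \<Rightarrow> bool" where
  "reach_in W E = (\<lambda>x y. x \<in> W \<and> y \<in> W \<and> E x y)\<^sup>*\<^sup>*"

definition components_in :: "'a set \<Rightarrow> ('a \<Rightarrow> 'a \<Rightarrow> bool) \<Rightarrow> 'a set set" where
  "components_in W E = {{y \<in> W. reach_in W E x y} | x. x \<in> W}"

definition psd_step :: "'a set \<Rightarrow> ('a \<Rightarrow> 'a \<Rightarrow> bool) \<Rightarrow> 'a set \<Rightarrow> 'a set \<Rightarrow> bool" where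
  "psd_step V E B B' \<longleftrightarrow>
     (\<exists>u v C. u \<in> B \<and> C \<in> components_in (V - B) E \<and>
              {w \<in> C. E u w} = {v} \<and> B' = insert v B)"

definition psd_forcing_set :: "'a set \<Rightarrow> ('a \<Rightarrow> 'a \<Rightarrow> bool) \<Rightarrow> 'a set \<Rightarrow> bool" where
  "psd_forcing_set V E S \<longleftrightarrow> S \<subseteq> V \<and> (psd_step V E)\<^sup>*\<^sup>* S V"

definition psd_Z :: "'a set \<Rightarrow> ('a \<Rightarrow> 'a \<Rightarrow> bool) \<Rightarrow> nat" where
  "psd_Z V E = (LEAST k. \<exists>S. psd_forcing_set V E S \<and> card S = k)"

definition min_psd_sets :: "'a set \<Rightarrow> ('a \<Rightarrow> 'a \<Rightarrow> bool) \<Rightarrow> 'a set set" where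
  "min_psd_sets V E = {S. psd_forcing_set V E S \<and> card S = psd_Z V E}"

definition TE_adj :: "'a set \<Rightarrow> 'a set \<Rightarrow> bool" where
  "TE_adj S1 S2 \<longleftrightarrow> (\<exists>v1 v2. S1 - S2 = {v1} \<and> S2 - S1 = {v2})"

definition TS_adj :: "('a \<Rightarrow> 'a \<Rightarrow> bool) \<Rightarrow> 'a set \<Rightarrow> 'a set \<Rightarrow> bool" where
  "TS_adj E S1 S2 \<longleftrightarrow> (\<exists>v1 v2. S1 - S2 = {v1} \<and> S2 - S1 = {v2} \<and> E v1 v2)"

definition num_components :: "'b set \<Rightarrow> ('b \<Rightarrow> 'b \<Rightarrow> bool) \<Rightarrow> nat" where
  "num_components X R = card (components_in X R)"

text \<open>Complete r-partite graph K_{q,...,q}: vertex (i,j) is the j-th vertex of part i.\<close>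
definition Kmp_V :: "nat \<Rightarrow> nat \<Rightarrow> (nat \<times> nat) set" where
  "Kmp_V r q = {(i, j). i < r \<and> j < q}"

definition Kmp_E :: "nat \<times> nat \<Rightarrow> nat \<times> nat \<Rightarrow> bool" where
  "Kmp_E x y \<longleftrightarrow> fst x \<noteq> fst y"

end

theory Submission
  imports Defs
begin

text \<open>Let P_j be the j-th part of K_{q,...,q}. The white vertices W = V - S of a PSD
forcing set S \<noteq> V either lie in a single part, or they span two parts; then W induces a
connected graph, so the first force needs a blue vertex u with exactly one white neighbour v,
and W lies in the part of u together with v. Either way |W| \<le> q, so Z_+ = (r - 1)q, and the
minimum PSD forcing sets are the sets V - P_j together with the sets obtained from V - P_j by
sliding one token from some v outside P_j to some u in P_j. The sets of index j form a star
around V - P_j in the TS graph. A set of index j misses at least q - 1 vertices of P_j and at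
most one vertex of any other part, while a token exchange changes such a count by at most one;
so for q \<ge> 4 no TE edge joins different indices, and both reconfiguration graphs have exactly
r components.\<close>

section \<open>Components of a graph covered by stars\<close>

lemma reach_in_closed:
  assumes "reach_in X R x y" "x \<in> A" "\<And>a b. a \<in> A \<Longrightarrow> b \<in> X \<Longrightarrow> R a b \<Longrightarrow> b \<in> A"
  shows "y \<in> A"
  using assms(1) unfolding reach_in_def
  by (induction rule: rtranclp_induct) (use assms(2,3) in auto)

lemma components_in_star_cover:
  assumes cover: "X = (\<Union>i\<in>I. C i)"
    and closed: "\<And>i x y. i \<in> I \<Longrightarrow> x \<in> C i \<Longrightarrow> y \<in> X \<Longrightarrow> R x y \<Longrightarrow> y \<in> C i"
    and center: "\<And>i. i \<in> I \<Longrightarrow> c i \<in> C i"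
    and star: "\<And>i x. i \<in> I \<Longrightarrow> x \<in> C i \<Longrightarrow> x \<noteq> c i \<Longrightarrow> R x (c i) \<and> R (c i) x"
  shows "components_in X R = C ` I"
proof -
  have component: "{y \<in> X. reach_in X R x y} = C i" if i: "i \<in> I" and x: "x \<in> C i" for i x
  proof
    show "{y \<in> X. reach_in X R x y} \<subseteq> C i"
      using reach_in_closed[where A = "C i"] closed i x by blast
    have CX: "C i \<subseteq> X" using cover i by blast
    have edge: "reach_in X R y z" if "y \<in> C i" "z \<in> C i" "R y z" for y z
      unfolding reach_in_def by (rule r_into_rtranclp) (use that CX in blast)
    have via_center: "reach_in X R y (c i) \<and> reach_in X R (c i) y" if y: "y \<in> C i" for y
    proof (cases "y = c i")
      case False
      then show ?thesis using star[OF i y] center[OF i] y edge by blast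
    qed (simp add: reach_in_def)
    show "C i \<subseteq> {y \<in> X. reach_in X R x y}"
    proof
      fix y assume y: "y \<in> C i"
      have "reach_in X R x (c i)" "reach_in X R (c i) y"
        using via_center[OF x] via_center[OF y] by auto
      then have "reach_in X R x y" unfolding reach_in_def by (rule rtranclp_trans)
      then show "y \<in> {y \<in> X. reach_in X R x y}" using y CX by blast
    qed
  qed
  have "{{y \<in> X. reach_in X R x y} | x. x \<in> X} = C ` I"
  proof (intro set_eqI iffI)
    fix D assume "D \<in> {{y \<in> X. reach_in X R x y} | x. x \<in> X}"
    then obtain x where x: "x \<in> X" "D = {y \<in> X. reach_in X R x y}" by blast
    then obtain i where "i \<in> I" "x \<in> C i" using cover by blast
    then show "D \<in> C ` I" using component x(2) by blast
  next
    fix D assume "D \<in> C ` I"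
    then obtain i where i: "i \<in> I" "D = C i" by blast
    then have "c i \<in> X" "D = {y \<in> X. reach_in X R (c i) y}"
      using component center cover by auto
    then show "D \<in> {{y \<in> X. reach_in X R x y} | x. x \<in> X}" by blast
  qed
  then show ?thesis unfolding components_in_def .
qed

lemma TS_adj_imp_TE_adj: "TS_adj E S S' \<Longrightarrow> TE_adj S S'"
  unfolding TS_adj_def TE_adj_def by blast

lemma TE_adj_card_diff_le:
  assumes "TE_adj S S'" "finite A"
  shows "card (A - S) \<le> Suc (card (A - S'))"
proof -
  obtain v where "S' - S = {v}" using assms(1) unfolding TE_adj_def by blast
  then have "A - S \<subseteq> insert v (A - S')" by blast
  then have "card (A - S) \<le> card (insert v (A - S'))"
    using assms(2) by (intro card_mono) auto
  also have "\<dots> \<le> Suc (card (A - S'))"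
    using assms(2) by (simp add: card_insert_if)
  finally show ?thesis .
qed

section \<open>PSD forcing in complete multipartite graphs\<close>

definition Kmp_part :: "nat \<Rightarrow> nat \<Rightarrow> (nat \<times> nat) set" where
  "Kmp_part q j = {j} \<times> {..<q}"

lemma Kmp_V_eq: "Kmp_V r q = {..<r} \<times> {..<q}"
  by (auto simp: Kmp_V_def)

lemma mem_Kmp_V: "x \<in> Kmp_V r q \<longleftrightarrow> fst x < r \<and> snd x < q"
  by (cases x) (simp add: Kmp_V_def)

lemma mem_Kmp_part: "x \<in> Kmp_part q j \<longleftrightarrow> fst x = j \<and> snd x < q"
  by (cases x) (auto simp: Kmp_part_def)

lemma finite_Kmp_V: "finite (Kmp_V r q)"
  by (simp add: Kmp_V_eq)

lemma card_Kmp_V: "card (Kmp_V r q) = r * q"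
  by (simp add: Kmp_V_eq card_cartesian_product)

lemma finite_Kmp_part: "finite (Kmp_part q j)"
  by (simp add: Kmp_part_def)

lemma card_Kmp_part: "card (Kmp_part q j) = q"
  by (simp add: Kmp_part_def card_cartesian_product)

lemma Kmp_part_subset: "j < r \<Longrightarrow> Kmp_part q j \<subseteq> Kmp_V r q"
  by (auto simp: mem_Kmp_part mem_Kmp_V)

lemma Kmp_V_diff_Kmp_part: "Kmp_V r q - Kmp_part q j = {x \<in> Kmp_V r q. fst x \<noteq> j}"
  by (auto simp: mem_Kmp_V mem_Kmp_part)

lemma components_in_Kmp_E_connected:
  assumes "a \<in> W" "b \<in> W" "fst a \<noteq> fst b"
  shows "components_in W Kmp_E = {W}"
proof -
  have edge: "reach_in W Kmp_E x y" if "x \<in> W" "y \<in> W" "fst x \<noteq> fst y" for x y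
    unfolding reach_in_def Kmp_E_def using that by (intro r_into_rtranclp) simp
  have "reach_in W Kmp_E x y" if x: "x \<in> W" and y: "y \<in> W" for x y
  proof (cases "fst x = fst y")
    case True
    obtain z where z: "z \<in> W" "fst z \<noteq> fst x" using assms by metis
    have "reach_in W Kmp_E x z" "reach_in W Kmp_E z y" using edge x y z True by auto
    then show ?thesis unfolding reach_in_def by (rule rtranclp_trans)
  qed (use edge x y in blast)
  then have "{y \<in> W. reach_in W Kmp_E x y} = W" if "x \<in> W" for x
    using that by blast
  then show ?thesis unfolding components_in_def using assms(1) by blast
qed

lemma components_in_Kmp_E_one_part:
  assumes w: "w \<in> W" and one_part: "\<forall>x\<in>W. fst x = fst w"
  shows "{w} \<in> components_in W Kmp_E"
proof -
  have "y = w" if "reach_in W Kmp_E w y" for y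
    using that unfolding reach_in_def
    by (rule converse_rtranclpE) (use one_part in \<open>auto simp: Kmp_E_def\<close>)
  then have "{y \<in> W. reach_in W Kmp_E w y} = {w}"
    using w by (auto simp: reach_in_def)
  then show ?thesis unfolding components_in_def using w by blast
qed

lemma psd_step_Kmp_E_cases:
  assumes "psd_step V Kmp_E B B'"
  obtains i where "\<forall>w\<in>V - B. fst w = i"
    | u v where "u \<in> B" "v \<in> V - B" "fst v \<noteq> fst u" "\<forall>w\<in>V - B. fst w = fst u \<or> w = v"
proof (cases "\<exists>a\<in>V - B. \<exists>b\<in>V - B. fst a \<noteq> fst b")
  case True
  then obtain a b where "a \<in> V - B" "b \<in> V - B" "fst a \<noteq> fst b" by blast
  then have components: "components_in (V - B) Kmp_E = {V - B}"
    by (rule components_in_Kmp_E_connected)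
  obtain u v C where u: "u \<in> B" and "C \<in> components_in (V - B) Kmp_E"
    and "{w \<in> C. Kmp_E u w} = {v}"
    using assms unfolding psd_step_def by blast
  then have unique_set: "{w \<in> V - B. fst u \<noteq> fst w} = {v}"
    using components by (simp add: Kmp_E_def)
  have unique: "w \<in> V - B \<and> fst u \<noteq> fst w \<longleftrightarrow> w = v" for w
    using unique_set[unfolded set_eq_iff, rule_format, of w] by simp
  have v: "v \<in> V - B" "fst v \<noteq> fst u" using unique[of v] by auto
  have "\<forall>w\<in>V - B. fst w = fst u \<or> w = v"
  proof
    fix w assume "w \<in> V - B"
    then show "fst w = fst u \<or> w = v" using unique[of w] by auto
  qed
  then show ?thesis by (rule that(2)[OF u v])
next
  case False
  show ?thesis
  proof (cases "V - B = {}")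
    case True
    then show ?thesis by (intro that(1)[of 0]) blast
  next
    case nonempty: False
    then obtain w0 where "w0 \<in> V - B" by blast
    then have "\<forall>w\<in>V - B. fst w = fst w0" using False by metis
    then show ?thesis by (rule that(1))
  qed
qed

lemma psd_steps_Kmp_E_white_one_part:
  assumes "finite W" "W \<subseteq> V" "\<forall>w\<in>W. fst w = i" "b \<in> V - W" "fst b \<noteq> i"
  shows "(psd_step V Kmp_E)\<^sup>*\<^sup>* (V - W) V"
  using assms
proof (induction W rule: finite_induct)
  case (insert w W)
  have wV: "w \<in> V" and part: "\<forall>x\<in>insert w W. fst x = fst w"
    using insert.prems(1,2) by auto
  have "{w} \<in> components_in (insert w W) Kmp_E"
    using part by (intro components_in_Kmp_E_one_part) simp_all
  moreover have "{x \<in> {w}. Kmp_E b x} = {w}"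
    using insert.prems(2,4) by (auto simp: Kmp_E_def)
  moreover have "V - (V - insert w W) = insert w W" using insert.prems(1) by blast
  ultimately have "psd_step V Kmp_E (V - insert w W) (insert w (V - insert w W))"
    unfolding psd_step_def using insert.prems(3) by metis
  moreover have "insert w (V - insert w W) = V - W" using wV insert.hyps(2) by blast
  moreover have "(psd_step V Kmp_E)\<^sup>*\<^sup>* (V - W) V"
    by (rule insert.IH) (use insert.prems in auto)
  ultimately show ?case by (metis converse_rtranclp_into_rtranclp)
qed simp

section \<open>Minimum PSD forcing sets of the complete multipartite graph\<close>

definition Kmp_class :: "nat \<Rightarrow> nat \<Rightarrow> nat \<Rightarrow> (nat \<times> nat) set set" where
  "Kmp_class r q j = insert (Kmp_V r q - Kmp_part q j)
     {insert u (Kmp_V r q - Kmp_part q j - {v}) | u v.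
        u \<in> Kmp_part q j \<and> v \<in> Kmp_V r q - Kmp_part q j}"

lemma Kmp_class_centerI: "Kmp_V r q - Kmp_part q j \<in> Kmp_class r q j"
  unfolding Kmp_class_def by (rule insertI1)

lemma Kmp_class_slideI:
  "u \<in> Kmp_part q j \<Longrightarrow> v \<in> Kmp_V r q - Kmp_part q j
    \<Longrightarrow> insert u (Kmp_V r q - Kmp_part q j - {v}) \<in> Kmp_class r q j"
  unfolding Kmp_class_def by (intro insertI2 CollectI exI conjI) simp_all

lemma Kmp_class_cases:
  assumes "S \<in> Kmp_class r q j"
  obtains "S = Kmp_V r q - Kmp_part q j"
    | u v where "u \<in> Kmp_part q j" "v \<in> Kmp_V r q - Kmp_part q j"
        "S = insert u (Kmp_V r q - Kmp_part q j - {v})"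
  using assms unfolding Kmp_class_def by (auto simp only: insert_iff mem_Collect_eq)

lemma Kmp_class_subset: "j < r \<Longrightarrow> S \<in> Kmp_class r q j \<Longrightarrow> S \<subseteq> Kmp_V r q"
  using Kmp_part_subset[of j r q] by (elim Kmp_class_cases) auto

lemma card_Kmp_class:
  assumes "j < r" "S \<in> Kmp_class r q j"
  shows "card S = r * q - q"
proof -
  have center: "card (Kmp_V r q - Kmp_part q j) = r * q - q"
    using Kmp_part_subset[OF assms(1)]
    by (simp add: card_Diff_subset finite_Kmp_part card_Kmp_part card_Kmp_V)
  from assms(2) show ?thesis
  proof (cases rule: Kmp_class_cases)
    case (2 u v)
    have "card S = Suc (card (Kmp_V r q - Kmp_part q j) - 1)"
      using 2 by (simp add: finite_Kmp_V card_insert_if)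
    moreover have "card (Kmp_V r q - Kmp_part q j) > 0"
      using 2(2) finite_Kmp_V by (auto simp: card_gt_0_iff)
    ultimately have "card S = card (Kmp_V r q - Kmp_part q j)" by arith
    then show ?thesis using center by simp
  qed (use center in simp)
qed

lemma psd_forcing_set_Kmp_class:
  assumes "r \<ge> 2" "q \<ge> 2" "j < r" "S \<in> Kmp_class r q j"
  shows "psd_forcing_set (Kmp_V r q) Kmp_E S"
proof -
  define V where "V = Kmp_V r q"
  define P where "P = Kmp_part q j"
  have PV: "P \<subseteq> V" using Kmp_part_subset[OF assms(3)] by (simp add: P_def V_def)
  have P_part: "\<forall>w\<in>P. fst w = j" "finite P" by (simp_all add: P_def mem_Kmp_part finite_Kmp_part)
  have "S = V - P \<or> (\<exists>u v. u \<in> P \<and> v \<in> V - P \<and> S = insert u (V - P - {v}))"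
    using assms(4) unfolding V_def P_def by (cases rule: Kmp_class_cases) auto
  then have "(psd_step V Kmp_E)\<^sup>*\<^sup>* S V"
  proof (elim disjE exE conjE)
    assume S: "S = V - P"
    define b where "b = (if j = 0 then 1 else 0 :: nat, 0 :: nat)"
    have "b \<in> V - P" "fst b \<noteq> j"
      using assms by (auto simp: b_def V_def P_def mem_Kmp_V mem_Kmp_part)
    then show ?thesis unfolding S using PV P_part by (intro psd_steps_Kmp_E_white_one_part)
  next
    fix u v assume u: "u \<in> P" and v: "v \<in> V - P" and S: "S = insert u (V - P - {v})"
    have white: "V - S = insert v (P - {u})" using u v S PV by blast
    define a where "a = (j, if snd u = 0 then 1 else 0 :: nat)"
    have a: "a \<in> P - {u}" using u assms(2) by (cases u) (auto simp: a_def P_def mem_Kmp_part)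
    have parts: "fst u = j" "fst a = j" "fst v \<noteq> j"
      using u a v unfolding V_def P_def Kmp_V_diff_Kmp_part by (auto simp: mem_Kmp_part)
    then have "components_in (V - S) Kmp_E = {V - S}"
      using a unfolding white by (intro components_in_Kmp_E_connected[of a _ v]) auto
    moreover have "{w \<in> V - S. Kmp_E u w} = {v}"
      using parts P_part(1) unfolding white by (auto simp: Kmp_E_def)
    moreover have "u \<in> S" using S by simp
    ultimately have "psd_step V Kmp_E S (insert v S)"
      unfolding psd_step_def by blast
    moreover have "(psd_step V Kmp_E)\<^sup>*\<^sup>* (insert v S) V"
    proof -
      have "insert v S = V - (P - {u})" using u v S PV by blast
      then show ?thesis
        by (simp only:) (rule psd_steps_Kmp_E_white_one_part[where i = j and b = v],
          use v PV P_part parts(3) in auto)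
    qed
    ultimately show ?thesis by (rule converse_rtranclp_into_rtranclp)
  qed
  then show ?thesis
    using Kmp_class_subset[OF assms(3,4)] by (simp add: psd_forcing_set_def V_def)
qed

lemma psd_forcing_set_Kmp_contains_class:
  assumes "psd_forcing_set (Kmp_V r q) Kmp_E S" "r \<ge> 1"
  obtains j S0 where "j < r" "S0 \<in> Kmp_class r q j" "S0 \<subseteq> S"
proof -
  define V where "V = Kmp_V r q"
  have SV: "S \<subseteq> V" and steps: "(psd_step V Kmp_E)\<^sup>*\<^sup>* S V"
    using assms(1) by (auto simp: psd_forcing_set_def V_def)
  note center = Kmp_class_centerI[of r q, folded V_def]
  show ?thesis
  proof (cases "S = V")
    case True
    then show ?thesis using that[OF _ center, of 0] assms(2) by auto
  next
    case False
    then obtain B' where "psd_step V Kmp_E S B'"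
      using steps by (auto elim: converse_rtranclpE)
    then show ?thesis
    proof (cases rule: psd_step_Kmp_E_cases)
      case (1 i)
      obtain w where "w \<in> V - S" using False SV by blast
      then have "i < r" using 1 by (auto simp: V_def mem_Kmp_V)
      moreover have "V - Kmp_part q i \<subseteq> S"
        using 1 unfolding V_def Kmp_V_diff_Kmp_part by blast
      ultimately show ?thesis using that center by blast
    next
      case (2 u v)
      have u: "fst u < r" "u \<in> Kmp_part q (fst u)"
        using 2(1) SV by (auto simp: V_def mem_Kmp_V mem_Kmp_part)
      have v: "v \<in> V - Kmp_part q (fst u)" using 2(2,3) by (auto simp: mem_Kmp_part)
      have "x \<in> S" if "x \<in> V" "fst x \<noteq> fst u" "x \<noteq> v" for x
        using 2(4) that by blast
      then have "insert u (V - Kmp_part q (fst u) - {v}) \<subseteq> S"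
        using 2(1) unfolding V_def Kmp_V_diff_Kmp_part by blast
      then show ?thesis
        using that[OF u(1) Kmp_class_slideI[OF u(2) v[unfolded V_def]]] by (simp add: V_def)
    qed
  qed
qed

lemma psd_Z_Kmp:
  assumes "r \<ge> 2" "q \<ge> 2"
  shows "psd_Z (Kmp_V r q) Kmp_E = r * q - q"
  unfolding psd_Z_def
proof (rule Least_equality)
  note center = Kmp_class_centerI[of r q 0]
  have "0 < r" using assms(1) by simp
  then have "psd_forcing_set (Kmp_V r q) Kmp_E (Kmp_V r q - Kmp_part q 0)"
    "card (Kmp_V r q - Kmp_part q 0) = r * q - q"
    using psd_forcing_set_Kmp_class[OF assms _ center] card_Kmp_class[OF _ center] by simp_all
  then show "\<exists>S. psd_forcing_set (Kmp_V r q) Kmp_E S \<and> card S = r * q - q" by blast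
next
  fix k assume "\<exists>S. psd_forcing_set (Kmp_V r q) Kmp_E S \<and> card S = k"
  then obtain S where S: "psd_forcing_set (Kmp_V r q) Kmp_E S" "card S = k" by blast
  obtain j S0 where S0: "j < r" "S0 \<in> Kmp_class r q j" "S0 \<subseteq> S"
    using psd_forcing_set_Kmp_contains_class[OF S(1)] assms(1) by auto
  have "finite S"
    using S(1) finite_Kmp_V by (auto simp: psd_forcing_set_def intro: finite_subset)
  then have "card S0 \<le> card S" using S0(3) by (rule card_mono)
  then show "r * q - q \<le> k" using S(2) card_Kmp_class[OF S0(1,2)] by simp
qed

lemma min_psd_sets_Kmp:
  assumes "r \<ge> 2" "q \<ge> 2"
  shows "min_psd_sets (Kmp_V r q) Kmp_E = (\<Union>j<r. Kmp_class r q j)"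
proof (intro set_eqI iffI)
  fix S assume "S \<in> min_psd_sets (Kmp_V r q) Kmp_E"
  then have S: "psd_forcing_set (Kmp_V r q) Kmp_E S" "card S = r * q - q"
    using psd_Z_Kmp[OF assms] by (auto simp: min_psd_sets_def)
  obtain j S0 where S0: "j < r" "S0 \<in> Kmp_class r q j" "S0 \<subseteq> S"
    using psd_forcing_set_Kmp_contains_class[OF S(1)] assms(1) by auto
  have "finite S"
    using S(1) finite_Kmp_V by (auto simp: psd_forcing_set_def intro: finite_subset)
  then have "S0 = S" using S0 S(2) card_Kmp_class by (metis card_subset_eq)
  then show "S \<in> (\<Union>j<r. Kmp_class r q j)" using S0 by blast
next
  fix S assume "S \<in> (\<Union>j<r. Kmp_class r q j)"
  then show "S \<in> min_psd_sets (Kmp_V r q) Kmp_E"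
    using assms psd_forcing_set_Kmp_class card_Kmp_class psd_Z_Kmp
    by (auto simp: min_psd_sets_def)
qed

section \<open>The reconfiguration graphs\<close>

lemma Kmp_class_own_part:
  assumes "j < r" "S \<in> Kmp_class r q j"
  shows "q - 1 \<le> card (Kmp_part q j - S)"
  using assms(2)
proof (cases rule: Kmp_class_cases)
  case 1
  then have "Kmp_part q j - S = Kmp_part q j" using Kmp_part_subset[OF assms(1)] by blast
  then show ?thesis by (simp add: card_Kmp_part)
next
  case (2 u v)
  then have "Kmp_part q j - S = Kmp_part q j - {u}" by blast
  then show ?thesis using 2(1) by (simp add: finite_Kmp_part card_Kmp_part)
qed

lemma Kmp_class_other_part:
  assumes "k < r" "k \<noteq> j" "S \<in> Kmp_class r q j"
  shows "card (Kmp_part q k - S) \<le> 1"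
proof -
  have part: "Kmp_part q k \<subseteq> Kmp_V r q - Kmp_part q j"
    using assms(1,2) by (auto simp: mem_Kmp_part mem_Kmp_V)
  obtain v where "Kmp_part q k - S \<subseteq> {v}"
    using assms(3)
  proof (cases rule: Kmp_class_cases)
    case 1
    then show ?thesis using part that by blast
  next
    case (2 u v)
    then show ?thesis using part that[of v] by blast
  qed
  then have "card (Kmp_part q k - S) \<le> card {v}" by (intro card_mono) simp_all
  then show ?thesis by simp
qed

lemma Kmp_class_TE_adj_same:
  assumes "q \<ge> 4" "j < r" "k < r" "S \<in> Kmp_class r q j" "S' \<in> Kmp_class r q k"
    "TE_adj S S'"
  shows "j = k"
proof (rule ccontr)
  assume "j \<noteq> k"
  then have "card (Kmp_part q j - S') \<le> 1"
    using Kmp_class_other_part assms(2,5) by metis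
  then have "card (Kmp_part q j - S) \<le> 2"
    using TE_adj_card_diff_le[OF assms(6) finite_Kmp_part[of q j]] by simp
  then show False using Kmp_class_own_part[OF assms(2,4)] assms(1) by simp
qed

lemma inj_on_Kmp_class:
  assumes "q \<ge> 3"
  shows "inj_on (Kmp_class r q) {..<r}"
proof (rule inj_onI, rule ccontr)
  fix j k assume jk: "j \<in> {..<r}" "k \<in> {..<r}" "Kmp_class r q j = Kmp_class r q k" "j \<noteq> k"
  have "Kmp_V r q - Kmp_part q j \<in> Kmp_class r q k"
    using Kmp_class_centerI[of r q j] jk(3) by simp
  then have "card (Kmp_part q j - (Kmp_V r q - Kmp_part q j)) \<le> 1"
    using Kmp_class_other_part jk by blast
  moreover have "Kmp_part q j - (Kmp_V r q - Kmp_part q j) = Kmp_part q j" by blast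
  ultimately show False using assms by (simp add: card_Kmp_part)
qed

lemma Kmp_class_TS_adj_center:
  assumes "S \<in> Kmp_class r q j" "S \<noteq> Kmp_V r q - Kmp_part q j"
  shows "TS_adj Kmp_E S (Kmp_V r q - Kmp_part q j) \<and> TS_adj Kmp_E (Kmp_V r q - Kmp_part q j) S"
  using assms(1)
proof (cases rule: Kmp_class_cases)
  case (2 u v)
  then have "S - (Kmp_V r q - Kmp_part q j) = {u}" "(Kmp_V r q - Kmp_part q j) - S = {v}"
    "Kmp_E u v" "Kmp_E v u"
    by (auto simp: Kmp_E_def mem_Kmp_part mem_Kmp_V)
  then show ?thesis unfolding TS_adj_def by blast
qed (use assms(2) in blast)

lemma components_in_min_psd_sets_Kmp:
  assumes "q \<ge> 4" "r \<ge> 2"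
    and TS_le: "\<And>S S'. TS_adj Kmp_E S S' \<Longrightarrow> R S S'" and le_TE: "\<And>S S'. R S S' \<Longrightarrow> TE_adj S S'"
  shows "components_in (min_psd_sets (Kmp_V r q) Kmp_E) R = Kmp_class r q ` {..<r}"
proof (rule components_in_star_cover)
  show "min_psd_sets (Kmp_V r q) Kmp_E = (\<Union>j\<in>{..<r}. Kmp_class r q j)"
    using min_psd_sets_Kmp assms(1,2) by simp
  show "S' \<in> Kmp_class r q j"
    if j: "j \<in> {..<r}" and S: "S \<in> Kmp_class r q j"
      and S': "S' \<in> min_psd_sets (Kmp_V r q) Kmp_E" and "R S S'" for j S S'
  proof -
    obtain k where k: "k < r" "S' \<in> Kmp_class r q k"
      using S' min_psd_sets_Kmp assms(1,2) by auto
    have "TE_adj S S'" using le_TE \<open>R S S'\<close> .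
    then have "j = k" using Kmp_class_TE_adj_same[OF assms(1) _ k(1) S k(2)] j by simp
    then show ?thesis using k(2) by simp
  qed
  show "Kmp_V r q - Kmp_part q j \<in> Kmp_class r q j" for j
    by (rule Kmp_class_centerI)
  show "R S (Kmp_V r q - Kmp_part q j) \<and> R (Kmp_V r q - Kmp_part q j) S"
    if "S \<in> Kmp_class r q j" "S \<noteq> Kmp_V r q - Kmp_part q j" for j S
    using Kmp_class_TS_adj_center[OF that] TS_le by blast
qed

theorem theorem4p15:
  fixes r q :: nat
  assumes "q \<ge> 4" and "r \<ge> 2"
  shows "num_components (min_psd_sets (Kmp_V r q) Kmp_E) (TS_adj Kmp_E) = r
       \<and> num_components (min_psd_sets (Kmp_V r q) Kmp_E) TE_adj = r"
proof -
  have "num_components (min_psd_sets (Kmp_V r q) Kmp_E) R = r"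
    if "\<And>S S'. TS_adj Kmp_E S S' \<Longrightarrow> R S S'" "\<And>S S'. R S S' \<Longrightarrow> TE_adj S S'" for R
  proof -
    have "components_in (min_psd_sets (Kmp_V r q) Kmp_E) R = Kmp_class r q ` {..<r}"
      by (rule components_in_min_psd_sets_Kmp[OF assms that])
    moreover have "inj_on (Kmp_class r q) {..<r}" using inj_on_Kmp_class assms(1) by simp
    ultimately show ?thesis unfolding num_components_def by (simp add: card_image)
  qed
  then show ?thesis using TS_adj_imp_TE_adj by blast
qed

end
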